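(* For all GP 2 programs (command sequences) $P$ and $Q$, $$P\ \mathtt{or}\ Q\ \equiv\ \mathtt{if}\ (\mathtt{remove!};\ \{\mathtt{create},\mathtt{null}\};\ \mathtt{zero})\ \mathtt{then}\ P\ \mathtt{else}\ Q,$$ where $\mathtt{remove}$ is a set of rule schemata that delete, respectively, an arbitrary non-loop edge, an arbitrary loop, and an arbitrary isolated node (labels given by list variables, with variants for every combination of marks, so that every edge, every loop and every isolated node of any host graph can be deleted by some schema in the set); $\mathtt{null}$ is the rule schema $\emptyset\Rightarrow\emptyset$; $\mathtt{create}$ is the rule schema $\emptyset\Rightarrow$ (a single unmarked node labelled $0$); and $\mathtt{zero}$ is the rule schema that matches a single unmarked node labelled $0$ and leaves it unchanged.
   Context: Host graphs are finite directed graphs (parallel edges and loops allowed) whose nodes and edges carry labels in $\mathcal{L}=(\mathbb{Z}\cup\mathrm{Char}^* )^*\times\{\mathrm{true},\mathrm{false}\}$ (a list of integers and strings together with a "mark" bit); graphs are considered up to isomorphism. A rule schema application $G\Rightarrow_r H$ consists of finding an injective match of the left graph of $r$ in $G$ (determining the values of the variables so that labels agree, and satisfying the rule's condition), deleting the images of the left-hand items not in the interface subject to the dangling condition (no deleted node may be incident to an undeleted edge), adding the right-hand items not in the interface, and relabelling interface nodes according to the right-hand side. For a set $R$ of rule schemata, $G\Rightarrow_R H$ means $G\Rightarrow_r H$ for some $r\in R$, and $G\not\Rightarrow_R$ means no such $H$ exists. Programs. Command sequences: ComSeq ::= Com {; Com}; Com ::= RuleSetCall | if ComSeq then ComSeq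 [else ComSeq] | try ComSeq then ComSeq [else ComSeq] | ComSeq ! | ComSeq or ComSeq | skip | fail; RuleSetCall ::= a rule schema name or a set $\{r_1,\dots,r_n\}$ ($n\ge 0$) of rule schemata. Operational semantics: a transition relation $\to$ from configurations $\langle P,G\rangle$ to configurations $\langle P',H\rangle$, graphs $H$, or fail, generated by the rules (with $R$ a rule set call, $C,P,P',Q$ command sequences, $G,H$ host graphs, $\to^+$ the transitive closure): [call1] $G\Rightarrow_R H$ implies $\langle R,G\rangle\to H$; [call2] $G\not\Rightarrow_R$ implies $\langle R,G\rangle\to\mathrm{fail}$; [seq1] $\langle P,G\rangle\to\langle P',H\rangle$ implies $\langle P;Q,G\rangle\to\langle P';Q,H\rangle$; [seq2] $\langle P,G\rangle\to H$ implies $\langle P;Q,G\rangle\to\langle Q,H\rangle$; [seq3] $\langle P,G\rangle\to\mathrm{fail}$ implies $\langle P;Q,G\rangle\to\mathrm{fail}$; [if1] $\langle C,G\rangle\to^+H$ implies $\langle \mathtt{if}\ C\ \mathtt{then}\ P\ \mathtt{else}\ Q,G\rangle\to\langle P,G\rangle$; [if2] $\langle C,G\rangle\to^+\mathrm{fail}$ implies $\langle \mathtt{if}\ C\ \mathtt{then}\ P\ \mathtt{else}\ Q,G\rangle\to\langle Q,G\rangle$; [try1] $\langle C,G\rangle\to^+H$ implies $\langle \mathtt{try}\ C\ \mathtt{then}\ P\ \mathtt{else}\ Q,G\rangle\to\langle P,H\rangle$; [try2] $\langle C,G\rangle\to^+\mathrm{fail}$ implies $\langle \mathtt{try}\ C\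 \mathtt{then}\ P\ \mathtt{else}\ Q,G\rangle\to\langle Q,G\rangle$; [alap1] $\langle P,G\rangle\to^+H$ implies $\langle P!,G\rangle\to\langle P!,H\rangle$; [alap2] $\langle P,G\rangle\to^+\mathrm{fail}$ implies $\langle P!,G\rangle\to G$; [or1] $\langle P\ \mathtt{or}\ Q,G\rangle\to\langle P,G\rangle$; [or2] $\langle P\ \mathtt{or}\ Q,G\rangle\to\langle Q,G\rangle$; [skip] $\langle\mathtt{skip},G\rangle\to G$; [fail] $\langle\mathtt{fail},G\rangle\to\mathrm{fail}$; [if3] $\langle C,G\rangle\to^+H$ implies $\langle\mathtt{if}\ C\ \mathtt{then}\ P,G\rangle\to\langle P,G\rangle$; [if4] $\langle C,G\rangle\to^+\mathrm{fail}$ implies $\langle\mathtt{if}\ C\ \mathtt{then}\ P,G\rangle\to G$; [try3] $\langle C,G\rangle\to^+H$ implies $\langle\mathtt{try}\ C\ \mathtt{then}\ P,G\rangle\to\langle P,H\rangle$; [try4] $\langle C,G\rangle\to^+\mathrm{fail}$ implies $\langle\mathtt{try}\ C\ \mathtt{then}\ P,G\rangle\to G$. A configuration is terminal if it has no successor. $P$ can diverge from $G$ if there is an infinite sequence $\langle P,G\rangle\to\langle P_1,G_1\rangle\to\langle P_2,G_2\rangle\to\cdots$; $P$ can get stuck from $G$ if $\langle P,G\rangle\to^*\langle Q,H\rangle$ for some terminal configuration $\langle Q,H\rangle$. Semantic function: $[\![P]\!]G=\{X\in\mathcal{G}(\mathcal{L})\cup\{\mathrm{fail}\}\mid \langle P,G\rangle\to^+X\}\cup\{\bot\mid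 P\text{ can diverge or get stuck from }G\}$. Programs are semantically equivalent, $P\equiv Q$, if $[\![P]\!]=[\![Q]\!]$. *)

theory Defs
  imports Main
begin

datatype atom = AInt int | AStr string

text \<open>Labels: a list of integers and strings together with a mark bit.\<close>
type_synonym label = "atom list \<times> bool"

record hgraph =
  V  :: "nat set"
  E  :: "nat set"
  src :: "nat \<Rightarrow> nat"
  tgt :: "nat \<Rightarrow> nat"
  nlab :: "nat \<Rightarrow> label"
  elab :: "nat \<Rightarrow> label"

definition wf_graph :: "hgraph \<Rightarrow> bool" where
  "wf_graph G \<longleftrightarrow> finite (V G) \<and> finite (E G) \<and>
     (\<forall>e\<in>E G. src G e \<in> V G \<and> tgt G e \<in> V G)"

definition graph_iso :: "hgraph \<Rightarrow> hgraph \<Rightarrow> bool" where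
  "graph_iso G H \<longleftrightarrow> (\<exists>fv fe. bij_betw fv (V G) (V H) \<and> bij_betw fe (E G) (E H) \<and>
     (\<forall>e\<in>E G. src H (fe e) = fv (src G e) \<and> tgt H (fe e) = fv (tgt G e)
               \<and> elab H (fe e) = elab G e) \<and>
     (\<forall>v\<in>V G. nlab H (fv v) = nlab G v))"

text \<open>Built-in rule schemata of the theorem, plus arbitrary user rule schemata
  (names of type 'r) whose application relation is given by a parameter.\<close>
datatype 'r rule = RmEdge | RmLoop | RmNode | Create | Null | Zero | User 'r

definition zero_label :: label where "zero_label = ([AInt 0], False)"

fun app_rule :: "('r \<Rightarrow> hgraph \<Rightarrow> hgraph \<Rightarrow> bool) \<Rightarrow> 'r rule \<Rightarrow> hgraph \<Rightarrow> hgraph \<Rightarrow> bool" where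
  "app_rule U RmEdge G H \<longleftrightarrow> (\<exists>e\<in>E G. src G e \<noteq> tgt G e \<and> H = G\<lparr>E := E G - {e}\<rparr>)"
| "app_rule U RmLoop G H \<longleftrightarrow> (\<exists>e\<in>E G. src G e = tgt G e \<and> H = G\<lparr>E := E G - {e}\<rparr>)"
| "app_rule U RmNode G H \<longleftrightarrow> (\<exists>v\<in>V G. (\<forall>e\<in>E G. src G e \<noteq> v \<and> tgt G e \<noteq> v)
                                   \<and> H = G\<lparr>V := V G - {v}\<rparr>)"
| "app_rule U Create G H \<longleftrightarrow> (\<exists>n. n \<notin> V G \<and>
        H = G\<lparr>V := insert n (V G), nlab := (nlab G)(n := zero_label)\<rparr>)"
| "app_rule U Null G H \<longleftrightarrow> H = G"
| "app_rule U Zero G H \<longleftrightarrow> H = G \<and> (\<exists>v\<in>V G. nlab G v = zero_label)"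
| "app_rule U (User r) G H \<longleftrightarrow> U r G H"

definition app_set :: "('r \<Rightarrow> hgraph \<Rightarrow> hgraph \<Rightarrow> bool) \<Rightarrow> 'r rule list \<Rightarrow> hgraph \<Rightarrow> hgraph \<Rightarrow> bool" where
  "app_set U R G H \<longleftrightarrow> (\<exists>r\<in>set R. app_rule U r G H)"

datatype 'r com =
    Call "'r rule list"
  | Seq "'r com" "'r com"
  | If "'r com" "'r com" "'r com"
  | IfT "'r com" "'r com"
  | Try "'r com" "'r com" "'r com"
  | TryT "'r com" "'r com"
  | Alap "'r com"
  | Or "'r com" "'r com"
  | Skip
  | Fail

type_synonym 'r conf = "'r com \<times> hgraph"

datatype 'r tgt = Cfg "'r com" hgraph | Gr hgraph | Fl

inductive step :: "('r \<Rightarrow> hgraph \<Rightarrow> hgraph \<Rightarrow> bool) \<Rightarrow> 'r conf \<Rightarrow> 'r tgt \<Rightarrow> bool"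
  and steps :: "('r \<Rightarrow> hgraph \<Rightarrow> hgraph \<Rightarrow> bool) \<Rightarrow> 'r conf \<Rightarrow> 'r tgt \<Rightarrow> bool"
  for U where
  call1: "app_set U R G H \<Longrightarrow> step U (Call R, G) (Gr H)"
| call2: "\<not> (\<exists>H. app_set U R G H) \<Longrightarrow> step U (Call R, G) Fl"
| seq1: "step U (P, G) (Cfg P' H) \<Longrightarrow> step U (Seq P Q, G) (Cfg (Seq P' Q) H)"
| seq2: "step U (P, G) (Gr H) \<Longrightarrow> step U (Seq P Q, G) (Cfg Q H)"
| seq3: "step U (P, G) Fl \<Longrightarrow> step U (Seq P Q, G) Fl"
| if1: "steps U (C, G) (Gr H) \<Longrightarrow> step U (If C P Q, G) (Cfg P G)"
| if2: "steps U (C, G) Fl \<Longrightarrow> step U (If C P Q, G) (Cfg Q G)"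
| try1: "steps U (C, G) (Gr H) \<Longrightarrow> step U (Try C P Q, G) (Cfg P H)"
| try2: "steps U (C, G) Fl \<Longrightarrow> step U (Try C P Q, G) (Cfg Q G)"
| alap1: "steps U (P, G) (Gr H) \<Longrightarrow> step U (Alap P, G) (Cfg (Alap P) H)"
| alap2: "steps U (P, G) Fl \<Longrightarrow> step U (Alap P, G) (Gr G)"
| or1: "step U (Or P Q, G) (Cfg P G)"
| or2: "step U (Or P Q, G) (Cfg Q G)"
| skip: "step U (Skip, G) (Gr G)"
| fail: "step U (Fail, G) Fl"
| if3: "steps U (C, G) (Gr H) \<Longrightarrow> step U (IfT C P, G) (Cfg P G)"
| if4: "steps U (C, G) Fl \<Longrightarrow> step U (IfT C P, G) (Gr G)"
| try3: "steps U (C, G) (Gr H) \<Longrightarrow> step U (TryT C P, G) (Cfg P H)"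
| try4: "steps U (C, G) Fl \<Longrightarrow> step U (TryT C P, G) (Gr G)"
| steps_one: "step U c x \<Longrightarrow> steps U c x"
| steps_more: "step U c (Cfg P' H) \<Longrightarrow> steps U (P', H) x \<Longrightarrow> steps U c x"

definition cstep :: "('r \<Rightarrow> hgraph \<Rightarrow> hgraph \<Rightarrow> bool) \<Rightarrow> 'r conf \<Rightarrow> 'r conf \<Rightarrow> bool" where
  "cstep U c c' \<longleftrightarrow> step U c (Cfg (fst c') (snd c'))"

definition can_diverge :: "('r \<Rightarrow> hgraph \<Rightarrow> hgraph \<Rightarrow> bool) \<Rightarrow> 'r com \<Rightarrow> hgraph \<Rightarrow> bool" where
  "can_diverge U P G \<longleftrightarrow> (\<exists>f :: nat \<Rightarrow> 'r conf. f 0 = (P, G) \<and> (\<forall>i. cstep U (f i) (f (Suc i))))"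

definition terminal :: "('r \<Rightarrow> hgraph \<Rightarrow> hgraph \<Rightarrow> bool) \<Rightarrow> 'r conf \<Rightarrow> bool" where
  "terminal U c \<longleftrightarrow> \<not> (\<exists>x. step U c x)"

definition can_get_stuck :: "('r \<Rightarrow> hgraph \<Rightarrow> hgraph \<Rightarrow> bool) \<Rightarrow> 'r com \<Rightarrow> hgraph \<Rightarrow> bool" where
  "can_get_stuck U P G \<longleftrightarrow> (\<exists>c. (cstep U)\<^sup>*\<^sup>* (P, G) c \<and> terminal U c)"

datatype result = Res hgraph | RFail | Bot

definition sem :: "('r \<Rightarrow> hgraph \<Rightarrow> hgraph \<Rightarrow> bool) \<Rightarrow> 'r com \<Rightarrow> hgraph \<Rightarrow> result set" where
  "sem U P G = {Res H | H. steps U (P, G) (Gr H)} \<union> (if steps U (P, G) Fl then {RFail} else {})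
     \<union> (if can_diverge U P G \<or> can_get_stuck U P G then {Bot} else {})"

text \<open>Results compared up to graph isomorphism (host graphs are considered up to isomorphism).\<close>
fun res_eq :: "result \<Rightarrow> result \<Rightarrow> bool" where
  "res_eq (Res G) (Res H) = graph_iso G H"
| "res_eq RFail RFail = True"
| "res_eq Bot Bot = True"
| "res_eq _ _ = False"

definition res_sets_eq :: "result set \<Rightarrow> result set \<Rightarrow> bool" where
  "res_sets_eq A B \<longleftrightarrow> (\<forall>x\<in>A. \<exists>y\<in>B. res_eq x y) \<and> (\<forall>y\<in>B. \<exists>x\<in>A. res_eq x y)"

definition sem_equiv :: "('r \<Rightarrow> hgraph \<Rightarrow> hgraph \<Rightarrow> bool) \<Rightarrow> 'r com \<Rightarrow> 'r com \<Rightarrow> bool" where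
  "sem_equiv U P Q \<longleftrightarrow> (\<forall>G. wf_graph G \<longrightarrow> res_sets_eq (sem U P G) (sem U Q G))"

text \<open>The set remove (all mark variants merged per shape) and the condition program.\<close>
definition remove :: "'r rule list" where "remove = [RmEdge, RmLoop, RmNode]"

end

theory Submission
  imports Defs
begin

(* The condition  C = remove!; {create, null}; zero  can, from every
   well-formed host graph, both succeed and fail: remove! deletes edges, loops and
   isolated nodes one at a time and therefore reaches a node-free graph; there
   "create" makes the 0-labelled node that "zero" needs, while "null" leaves the
   graph node-free so that "zero" fails.  By rules [if1]/[if2] the configuration
   <if C then P else Q, G> thus has exactly the successors <P,G> and <Q,G>, which
   are also the successors of <P or Q, G> by [or1]/[or2].  Configurations with
   the same one-step successors have the same semantics, which gives the theorem. *)

lemma steps_trans: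
  "steps U c (Cfg P H) \<Longrightarrow> steps U (P, H) x \<Longrightarrow> steps U c x"
proof (induction c "Cfg P H" arbitrary: P H
       rule: step_steps.inducts(2)[where ?P1.0 = "\<lambda>c x. True"])
  case (steps_one c)
  then show ?case by (blast intro: step_steps.steps_more)
next
  case (steps_more c P' H')
  then show ?case by (blast intro: step_steps.steps_more)
qed auto

text \<open>A run of A to a graph lifts to a run of A; B that stops at the start of B
  (first with the configurations as variables, as rule induction requires).\<close>
lemma steps_seq_gen:
  "steps U c y \<Longrightarrow> c = (A, G) \<Longrightarrow> y = Gr H \<Longrightarrow> steps U (Seq A B, G) (Cfg B H)"
proof (induction arbitrary: A G rule: step_steps.inducts(2)[where ?P1.0 = "\<lambda>c x. True"])
  case (steps_one c y)
  then show ?case by (blast intro: step_steps.seq2 step_steps.steps_one)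
next
  case (steps_more c P' H' y)
  then show ?case by (blast intro: step_steps.seq1 step_steps.steps_more)
qed auto

lemma steps_seq:
  "steps U (A, G) (Gr H) \<Longrightarrow> steps U (Seq A B, G) (Cfg B H)"
  using steps_seq_gen by blast

lemma same_succ_steps:
  assumes "\<And>y. step U c1 y \<longleftrightarrow> step U c2 y"
  shows "steps U c1 x \<longleftrightarrow> steps U c2 x"
proof
  assume "steps U c1 x"
  then show "steps U c2 x"
    by (cases rule: steps.cases)
       (auto simp: assms intro: step_steps.steps_one step_steps.steps_more)
next
  assume "steps U c2 x"
  then show "steps U c1 x"
    by (cases rule: steps.cases)
       (auto simp: assms intro: step_steps.steps_one step_steps.steps_more)
qed

lemma same_succ_diverge:
  assumes "\<And>y. step U (P1, G) y \<longleftrightarrow> step U (P2, G) y"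
  shows "can_diverge U P1 G \<Longrightarrow> can_diverge U P2 G"
proof -
  assume "can_diverge U P1 G"
  then obtain f where f0: "f 0 = (P1, G)" and run: "\<forall>i. cstep U (f i) (f (Suc i))"
    unfolding can_diverge_def by blast
  define g where "g = f(0 := (P2, G))"
  have "cstep U (g i) (g (Suc i))" for i
  proof (cases i)
    case 0
    then show ?thesis using f0 run[rule_format, of 0] assms by (auto simp: g_def cstep_def)
  next
    case (Suc n)
    then show ?thesis using run by (simp add: g_def)
  qed
  then show "can_diverge U P2 G"
    unfolding can_diverge_def by (intro exI[of _ g]) (simp add: g_def)
qed

lemma same_succ_stuck:
  assumes "\<And>y. step U (P1, G) y \<longleftrightarrow> step U (P2, G) y"
  shows "can_get_stuck U P1 G \<Longrightarrow> can_get_stuck U P2 G"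
proof -
  assume "can_get_stuck U P1 G"
  then obtain c where run: "(cstep U)\<^sup>*\<^sup>* (P1, G) c" and stuck: "terminal U c"
    unfolding can_get_stuck_def by blast
  from run show "can_get_stuck U P2 G"
  proof (cases rule: converse_rtranclpE)
    case base
    then have "terminal U (P2, G)" using stuck assms unfolding terminal_def by auto
    then show ?thesis unfolding can_get_stuck_def by blast
  next
    case (step c')
    then have "(cstep U)\<^sup>*\<^sup>* (P2, G) c"
      using assms by (auto simp: cstep_def intro: converse_rtranclp_into_rtranclp)
    then show ?thesis using stuck unfolding can_get_stuck_def by blast
  qed
qed

lemma same_succ_sem:
  assumes "\<And>y. step U (P1, G) y \<longleftrightarrow> step U (P2, G) y"
  shows "sem U P1 G = sem U P2 G"
proof -
  have "can_diverge U P1 G \<longleftrightarrow> can_diverge U P2 G"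
    using same_succ_diverge[of U P1 G P2] same_succ_diverge[of U P2 G P1] assms by blast
  moreover have "can_get_stuck U P1 G \<longleftrightarrow> can_get_stuck U P2 G"
    using same_succ_stuck[of U P1 G P2] same_succ_stuck[of U P2 G P1] assms by blast
  ultimately show ?thesis
    unfolding sem_def using same_succ_steps[of U "(P1, G)" "(P2, G)"] assms by simp
qed

lemma if_as_or_step:
  assumes succeeds: "steps U (C, G) (Gr H)" and fails: "steps U (C, G) Fl"
  shows "step U (If C P Q, G) y \<longleftrightarrow> step U (Or P Q, G) y"
proof -
  have "step U (If C P Q, G) y \<longleftrightarrow> y = Cfg P G \<or> y = Cfg Q G"
    using step_steps.if1[OF succeeds] step_steps.if2[OF fails]
    by (auto elim: step.cases)
  moreover have "step U (Or P Q, G) y \<longleftrightarrow> y = Cfg P G \<or> y = Cfg Q G"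
    by (auto elim: step.cases intro: step_steps.or1 step_steps.or2)
  ultimately show ?thesis by simp
qed

lemma remove_step:
  assumes wf: "wf_graph G" and "V G \<noteq> {}"
  obtains H where "app_set U remove G H" "wf_graph H"
    "card (V H) + card (E H) < card (V G) + card (E G)"
proof (cases "E G = {}")
  case False
  then obtain e where e: "e \<in> E G" by blast
  let ?H = "G\<lparr>E := E G - {e}\<rparr>"
  have "app_set U remove G ?H"
    unfolding app_set_def remove_def using e by (cases "src G e = tgt G e") auto
  moreover have "wf_graph ?H" using wf unfolding wf_graph_def by auto
  moreover have "card (E ?H) < card (E G)"
    using e wf card_gt_0_iff[of "E G"] unfolding wf_graph_def by auto
  ultimately show ?thesis using that by simp
next
  case noedges: True
  obtain v where v: "v \<in> V G" using \<open>V G \<noteq> {}\<close> by blast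
  let ?H = "G\<lparr>V := V G - {v}\<rparr>"
  have "app_set U remove G ?H" unfolding app_set_def remove_def using v noedges by auto
  moreover have "wf_graph ?H" using wf noedges unfolding wf_graph_def by auto
  moreover have "card (V ?H) < card (V G)"
    using v wf card_gt_0_iff[of "V G"] unfolding wf_graph_def by auto
  ultimately show ?thesis using that by simp
qed

lemma remove_not_applicable:
  assumes "wf_graph G" and "V G = {}"
  shows "\<not> (\<exists>H. app_set U remove G H)"
  using assms unfolding wf_graph_def app_set_def remove_def by auto

lemma remove_alap_reaches_empty:
  "wf_graph G \<Longrightarrow> \<exists>H. steps U (Alap (Call remove), G) (Gr H) \<and> V H = {}"
proof (induction "card (V G) + card (E G)" arbitrary: G rule: less_induct)
  case less
  show ?case
  proof (cases "V G = {}")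
    case True
    then have "step U (Alap (Call remove), G) (Gr G)"
      using remove_not_applicable[OF less.prems]
      by (intro step_steps.alap2 step_steps.steps_one step_steps.call2)
    then show ?thesis using True step_steps.steps_one by blast
  next
    case False
    then obtain H' where app: "app_set U remove G H'" and wf: "wf_graph H'"
      and smaller: "card (V H') + card (E H') < card (V G) + card (E G)"
      using remove_step[OF less.prems] by blast
    obtain H where H: "steps U (Alap (Call remove), H') (Gr H)" "V H = {}"
      using less.hyps[OF smaller wf] by blast
    have "steps U (Alap (Call remove), G) (Cfg (Alap (Call remove)) H')"
      using app by (intro step_steps.steps_one step_steps.alap1 step_steps.steps_one
                          step_steps.call1)
    then show ?thesis using H steps_trans by blast
  qed
qed

abbreviation test_zero :: "'r com" where
  "test_zero \<equiv> Seq (Call [Create, Null]) (Call [Zero])"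

lemma test_zero_succeeds:
  assumes "V G = {}"
  shows "\<exists>H. steps U (test_zero, G) (Gr H)"
proof -
  let ?H = "G\<lparr>V := insert 0 (V G), nlab := (nlab G)(0 := zero_label)\<rparr>"
  have "app_set U [Create, Null] G ?H" unfolding app_set_def using assms by auto
  then have "step U (test_zero, G) (Cfg (Call [Zero]) ?H)"
    by (intro step_steps.seq2 step_steps.call1)
  moreover have "step U (Call [Zero], ?H) (Gr ?H)"
    by (rule step_steps.call1) (auto simp: app_set_def)
  ultimately show ?thesis by (blast intro: step_steps.steps_more step_steps.steps_one)
qed

lemma test_zero_fails:
  assumes "V G = {}"
  shows "steps U (test_zero, G) Fl"
proof -
  have "step U (test_zero, G) (Cfg (Call [Zero]) G)"
    by (intro step_steps.seq2 step_steps.call1) (auto simp: app_set_def)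
  moreover have "step U (Call [Zero], G) Fl"
    by (rule step_steps.call2) (use assms in \<open>auto simp: app_set_def\<close>)
  ultimately show ?thesis by (blast intro: step_steps.steps_more step_steps.steps_one)
qed

lemma condition_succeeds_and_fails:
  assumes "wf_graph G"
  shows "\<exists>H. steps U (Seq (Alap (Call remove)) test_zero, G) (Gr H)"
    and "steps U (Seq (Alap (Call remove)) test_zero, G) Fl"
proof -
  obtain H0 where loop: "steps U (Alap (Call remove), G) (Gr H0)" and empty: "V H0 = {}"
    using remove_alap_reaches_empty[OF assms] by blast
  have prefix: "steps U (Seq (Alap (Call remove)) test_zero, G) (Cfg test_zero H0)"
    using loop by (rule steps_seq)
  show "\<exists>H. steps U (Seq (Alap (Call remove)) test_zero, G) (Gr H)"
    using test_zero_succeeds[OF empty] steps_trans[OF prefix] by blast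
  show "steps U (Seq (Alap (Call remove)) test_zero, G) Fl"
    using test_zero_fails[OF empty] steps_trans[OF prefix] by blast
qed

lemma res_eq_refl: "res_eq x x"
proof (cases x)
  case (Res G)
  have "graph_iso G G" unfolding graph_iso_def by (intro exI[of _ id]) auto
  then show ?thesis using Res by simp
qed auto

theorem mainTheorem2:
  fixes U :: "'r \<Rightarrow> hgraph \<Rightarrow> hgraph \<Rightarrow> bool" and P Q :: "'r com"
  shows "sem_equiv U (Or P Q)
           (If (Seq (Alap (Call remove)) (Seq (Call [Create, Null]) (Call [Zero]))) P Q)"
  unfolding sem_equiv_def
proof (intro allI impI)
  fix G assume wf: "wf_graph G"
  let ?C = "Seq (Alap (Call remove)) test_zero"
  obtain H where "steps U (?C, G) (Gr H)"
    using condition_succeeds_and_fails(1)[OF wf] by blast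
  then have "step U (Or P Q, G) y \<longleftrightarrow> step U (If ?C P Q, G) y" for y
    using if_as_or_step condition_succeeds_and_fails(2)[OF wf] by blast
  then have "sem U (Or P Q) G = sem U (If ?C P Q) G" by (rule same_succ_sem)
  then show "res_sets_eq (sem U (Or P Q) G) (sem U (If ?C P Q) G)"
    unfolding res_sets_eq_def using res_eq_refl by metis
qed

end
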